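(* Let $(H,B_1,B_2)$ be a Rota-Baxter system of Hopf algebras with cocycle $\sigma$. Then $B_1\circ\sigma=B_1$ and $B_2\circ\sigma=B_2$. Furthermore, $\sigma$ is idempotent and is a coalgebra homomorphism.
   Context: $\mathbb{F}$ is a field of characteristic $0$; Sweedler notation $\Delta(a)=a_1\otimes a_2$. A coalgebra homomorphism $f$ satisfies $\Delta(f(a))=f(a_1)\otimes f(a_2)$, $\epsilon(f(a))=\epsilon(a)$. A Rota-Baxter system of Hopf algebras is a triple $(H,B_1,B_2)$ where $(H,\cdot,1,\Delta,\epsilon,S)$ is a cocommutative Hopf algebra and $B_1,B_2:H\to H$ are coalgebra homomorphisms with $B_1(1)=B_2(1)=1$ such that for all $a,b\in H$: $B_1(a)B_1(b)=B_1(B_1(a_1)bS(B_2(a_2)))$ and $B_2(a)B_2(b)=B_2(B_1(a_1)bS(B_2(a_2)))$. Its cocycle is $\sigma:H\to H$, $\sigma(a)=B_1(a_1)S(B_2(a_2))$. *)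

theory Defs
  imports Complex_Main
begin

text \<open>H is a type 'h with a ring structure (ring_1) and a scalar
multiplication sc :: 'f \<Rightarrow> 'h \<Rightarrow> 'h over a field 'f of characteristic 0
making it an associative unital 'f-algebra.  The comultiplication is given by a
representative  Delta a = [(x_1,y_1),...,(x_n,y_n)]  of the tensor
sum_i x_i (x) y_i  (scalars absorbed into x_i).  Sweedler sums
f(a_1,a_2) for bilinear f are  sw Delta a f = sum_i f x_i y_i.
Equality of elements of H (x) H (resp. H (x) H (x) H) is expressed by testing
against all 'f-valued bilinear (resp. trilinear) forms; this is exact since
the algebraic dual of a vector space separates points.\<close>

definition sw :: "('h \<Rightarrow> ('h \<times> 'h) list) \<Rightarrow> 'h \<Rightarrow> ('h \<Rightarrow> 'h \<Rightarrow> 'b::comm_monoid_add) \<Rightarrow> 'b" where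
  "sw Delta a f = (\<Sum>(x, y)\<leftarrow>Delta a. f x y)"

definition f_algebra :: "('f::field \<Rightarrow> 'h::ring_1 \<Rightarrow> 'h) \<Rightarrow> bool" where
  "f_algebra sc \<longleftrightarrow> Vector_Spaces.vector_space sc \<and>
     (\<forall>c a b. sc c (a * b) = sc c a * b \<and> sc c (a * b) = a * sc c b)"

definition bilin :: "('f::field \<Rightarrow> 'h::ring_1 \<Rightarrow> 'h) \<Rightarrow> ('h \<Rightarrow> 'h \<Rightarrow> 'f) \<Rightarrow> bool" where
  "bilin sc \<beta> \<longleftrightarrow> (\<forall>x. Vector_Spaces.linear sc (*) (\<beta> x)) \<and>
                    (\<forall>y. Vector_Spaces.linear sc (*) (\<lambda>x. \<beta> x y))"

definition trilin :: "('f::field \<Rightarrow> 'h::ring_1 \<Rightarrow> 'h) \<Rightarrow> ('h \<Rightarrow> 'h \<Rightarrow> 'h \<Rightarrow> 'f) \<Rightarrow> bool" where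
  "trilin sc \<tau> \<longleftrightarrow> (\<forall>x y. Vector_Spaces.linear sc (*) (\<tau> x y)) \<and>
                    (\<forall>x z. Vector_Spaces.linear sc (*) (\<lambda>y. \<tau> x y z)) \<and>
                    (\<forall>y z. Vector_Spaces.linear sc (*) (\<lambda>x. \<tau> x y z))"

definition cocomm_hopf ::
  "('f::field \<Rightarrow> 'h::ring_1 \<Rightarrow> 'h) \<Rightarrow> ('h \<Rightarrow> ('h \<times> 'h) list) \<Rightarrow> ('h \<Rightarrow> 'f) \<Rightarrow> ('h \<Rightarrow> 'h) \<Rightarrow> bool" where
  "cocomm_hopf sc Delta eps S \<longleftrightarrow>
     f_algebra sc \<and>
     \<comment> \<open>Delta is linear\<close>
     (\<forall>\<beta>. bilin sc \<beta> \<longrightarrow> (\<forall>a b c d. sw Delta (sc c a + sc d b) \<beta> = c * sw Delta a \<beta> + d * sw Delta b \<beta>)) \<and>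
     \<comment> \<open>coassociativity\<close>
     (\<forall>\<tau>. trilin sc \<tau> \<longrightarrow> (\<forall>a. sw Delta a (\<lambda>x y. sw Delta x (\<lambda>u v. \<tau> u v y))
                                 = sw Delta a (\<lambda>x y. sw Delta y (\<lambda>u v. \<tau> x u v)))) \<and>
     \<comment> \<open>counit\<close>
     Vector_Spaces.linear sc (*) eps \<and>
     (\<forall>a. sw Delta a (\<lambda>x y. sc (eps x) y) = a \<and> sw Delta a (\<lambda>x y. sc (eps y) x) = a) \<and>
     \<comment> \<open>cocommutativity\<close>
     (\<forall>\<beta>. bilin sc \<beta> \<longrightarrow> (\<forall>a. sw Delta a \<beta> = sw Delta a (\<lambda>x y. \<beta> y x))) \<and>
     \<comment> \<open>Delta and eps are unital algebra maps\<close>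
     (\<forall>\<beta>. bilin sc \<beta> \<longrightarrow> (\<forall>a b. sw Delta (a * b) \<beta> = sw Delta a (\<lambda>x y. sw Delta b (\<lambda>u v. \<beta> (x * u) (y * v))))) \<and>
     (\<forall>\<beta>. bilin sc \<beta> \<longrightarrow> sw Delta 1 \<beta> = \<beta> 1 1) \<and>
     (\<forall>a b. eps (a * b) = eps a * eps b) \<and> eps 1 = 1 \<and>
     \<comment> \<open>antipode\<close>
     Vector_Spaces.linear sc sc S \<and>
     (\<forall>a. sw Delta a (\<lambda>x y. S x * y) = sc (eps a) 1 \<and> sw Delta a (\<lambda>x y. x * S y) = sc (eps a) 1)"

definition coalg_hom ::
  "('f::field \<Rightarrow> 'h::ring_1 \<Rightarrow> 'h) \<Rightarrow> ('h \<Rightarrow> ('h \<times> 'h) list) \<Rightarrow> ('h \<Rightarrow> 'f) \<Rightarrow> ('h \<Rightarrow> 'h) \<Rightarrow> bool" where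
  "coalg_hom sc Delta eps f \<longleftrightarrow>
     Vector_Spaces.linear sc sc f \<and>
     (\<forall>\<beta>. bilin sc \<beta> \<longrightarrow> (\<forall>a. sw Delta (f a) \<beta> = sw Delta a (\<lambda>x y. \<beta> (f x) (f y)))) \<and>
     (\<forall>a. eps (f a) = eps a)"

definition rota_baxter_system ::
  "('f::field \<Rightarrow> 'h::ring_1 \<Rightarrow> 'h) \<Rightarrow> ('h \<Rightarrow> ('h \<times> 'h) list) \<Rightarrow> ('h \<Rightarrow> 'f) \<Rightarrow> ('h \<Rightarrow> 'h)
     \<Rightarrow> ('h \<Rightarrow> 'h) \<Rightarrow> ('h \<Rightarrow> 'h) \<Rightarrow> bool" where
  "rota_baxter_system sc Delta eps S B1 B2 \<longleftrightarrow>
     cocomm_hopf sc Delta eps S \<and>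
     coalg_hom sc Delta eps B1 \<and> coalg_hom sc Delta eps B2 \<and> B1 1 = 1 \<and> B2 1 = 1 \<and>
     (\<forall>a b. B1 a * B1 b = B1 (sw Delta a (\<lambda>x y. B1 x * b * S (B2 y)))) \<and>
     (\<forall>a b. B2 a * B2 b = B2 (sw Delta a (\<lambda>x y. B1 x * b * S (B2 y))))"

definition rbs_cocycle ::
  "('h::ring_1 \<Rightarrow> ('h \<times> 'h) list) \<Rightarrow> ('h \<Rightarrow> 'h) \<Rightarrow> ('h \<Rightarrow> 'h) \<Rightarrow> ('h \<Rightarrow> 'h) \<Rightarrow> 'h \<Rightarrow> 'h" where
  "rbs_cocycle Delta S B1 B2 a = sw Delta a (\<lambda>x y. B1 x * S (B2 y))"

end

theory Submission
  imports Defs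
begin

text \<open>Putting b = 1 in the two Rota-Baxter identities gives B_i(\<sigma> a) = B_i(a) at once.
In a cocommutative Hopf algebra the antipode is a coalgebra map, so
\<Delta>(\<sigma> a) = B1(a_1) S(B2(a_3)) \<otimes> B1(a_2) S(B2(a_4)), and cocommutativity lets a_2 and a_3
change places, giving \<Delta>(\<sigma> a) = \<sigma>(a_1) \<otimes> \<sigma>(a_2). Idempotence then follows from the first
part: \<sigma>(\<sigma> a) = B1(\<sigma>(a_1)) S(B2(\<sigma>(a_2))) = B1(a_1) S(B2(a_2)) = \<sigma> a.
Since tensors are only accessible through bilinear forms, identities in H are verified
after applying an arbitrary linear form; linear forms separate points.\<close>

lemma sw_add: "sw D a (\<lambda>x y. f x y + g x y) = sw D a f + sw D a g"
  by (simp add: sw_def split_def sum_list_addf)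

lemma sw_zero: "sw D a (\<lambda>x y. 0) = 0"
  by (simp add: sw_def split_def)

lemma sw_const_mult: "sw D a (\<lambda>x y. (c::'a::semiring_0) * f x y) = c * sw D a f"
  by (simp add: sw_def split_def sum_list_const_mult)

lemma sw_mult_const: "sw D a (\<lambda>x y. f x y * (c::'a::semiring_0)) = sw D a f * c"
  by (simp add: sw_def split_def sum_list_mult_const)

lemma sw_comp_morphism:
  assumes "\<And>x y. h (x + y) = h x + h y" and "h 0 = 0"
  shows "h (sw D a f) = sw D a (\<lambda>x y. h (f x y))"
proof -
  have "h (\<Sum>(x, y)\<leftarrow>xs. f x y) = (\<Sum>(x, y)\<leftarrow>xs. h (f x y))" for xs
    by (induct xs) (auto simp: assms)
  then show ?thesis unfolding sw_def .
qed

lemma sw_swap: "sw D a (\<lambda>x y. sw E b (F x y)) = sw E b (\<lambda>u v. sw D a (\<lambda>x y. F x y u v))"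
proof -
  have "(\<Sum>(x, y)\<leftarrow>xs. sw E b (F x y)) = sw E b (\<lambda>u v. \<Sum>(x, y)\<leftarrow>xs. F x y u v)" for xs
    by (induct xs) (auto simp: sw_add sw_zero)
  then show ?thesis unfolding sw_def[of D] .
qed

lemma vector_space_field_mult: "Vector_Spaces.vector_space ((*) :: 'f::field \<Rightarrow> 'f \<Rightarrow> 'f)"
  by unfold_locales (auto simp: algebra_simps)

locale cocomm_hopf_algebra =
  fixes sc :: "'f::field \<Rightarrow> 'h::ring_1 \<Rightarrow> 'h" and Delta :: "'h \<Rightarrow> ('h \<times> 'h) list"
    and eps :: "'h \<Rightarrow> 'f" and S :: "'h \<Rightarrow> 'h"
  assumes cocomm_hopf: "cocomm_hopf sc Delta eps S"
begin

abbreviation linear_form :: "('h \<Rightarrow> 'f) \<Rightarrow> bool" where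
  "linear_form \<equiv> Vector_Spaces.linear sc (*)"

abbreviation linear_op :: "('h \<Rightarrow> 'h) \<Rightarrow> bool" where
  "linear_op \<equiv> Vector_Spaces.linear sc sc"

lemma vector_space: "Vector_Spaces.vector_space sc"
  and scale_mult_left: "sc c (a * b) = sc c a * b"
  and scale_mult_right: "sc c (a * b) = a * sc c b"
  using cocomm_hopf unfolding cocomm_hopf_def f_algebra_def by blast+

sublocale vs: vector_space sc
  by (rule vector_space)

lemma coproduct_linear:
    "bilin sc \<beta> \<Longrightarrow> sw Delta (sc c a + sc d b) \<beta> = c * sw Delta a \<beta> + d * sw Delta b \<beta>"
  and coassoc: "trilin sc \<tau> \<Longrightarrow>
    sw Delta a (\<lambda>x y. sw Delta x (\<lambda>u v. \<tau> u v y)) = sw Delta a (\<lambda>x y. sw Delta y (\<lambda>u v. \<tau> x u v))"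
  and counit_linear: "linear_form eps"
  and counit_left: "sw Delta a (\<lambda>x y. sc (eps x) y) = a"
  and counit_right: "sw Delta a (\<lambda>x y. sc (eps y) x) = a"
  and cocomm: "bilin sc \<beta> \<Longrightarrow> sw Delta a \<beta> = sw Delta a (\<lambda>x y. \<beta> y x)"
  and coproduct_mult: "bilin sc \<beta> \<Longrightarrow>
    sw Delta (a * b) \<beta> = sw Delta a (\<lambda>x y. sw Delta b (\<lambda>u v. \<beta> (x * u) (y * v)))"
  and coproduct_one: "bilin sc \<beta> \<Longrightarrow> sw Delta 1 \<beta> = \<beta> 1 1"
  and counit_mult: "eps (a * b) = eps a * eps b"
  and counit_one: "eps 1 = 1"
  and antipode_linear: "linear_op S"
  and antipode_left: "sw Delta a (\<lambda>x y. S x * y) = sc (eps a) 1"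
  and antipode_right: "sw Delta a (\<lambda>x y. x * S y) = sc (eps a) 1"
  using cocomm_hopf unfolding cocomm_hopf_def by blast+

lemma linear_form_add: "linear_form \<phi> \<Longrightarrow> \<phi> (x + y) = \<phi> x + \<phi> y"
  and linear_form_scale: "linear_form \<phi> \<Longrightarrow> \<phi> (sc c x) = c * \<phi> x"
  and linear_form_zero: "linear_form \<phi> \<Longrightarrow> \<phi> 0 = 0"
  by (auto simp: Vector_Spaces.linear_iff) (metis vs.scale_zero_left mult_zero_left)

lemma linear_op_add: "linear_op L \<Longrightarrow> L (x + y) = L x + L y"
  and linear_op_scale: "linear_op L \<Longrightarrow> L (sc c x) = sc c (L x)"
  by (auto simp: Vector_Spaces.linear_iff)

lemma linear_formI:
  "(\<And>x y. \<phi> (x + y) = \<phi> x + \<phi> y) \<Longrightarrow> (\<And>c x. \<phi> (sc c x) = c * \<phi> x) \<Longrightarrow> linear_form \<phi>"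
  by (simp add: Vector_Spaces.linear_iff vector_space vector_space_field_mult)

lemma linear_opI:
  "(\<And>x y. L (x + y) = L x + L y) \<Longrightarrow> (\<And>c x. L (sc c x) = sc c (L x)) \<Longrightarrow> linear_op L"
  by (simp add: Vector_Spaces.linear_iff vector_space)

lemma bilinI: "(\<And>u. linear_form (\<beta> u)) \<Longrightarrow> (\<And>v. linear_form (\<lambda>u. \<beta> u v)) \<Longrightarrow> bilin sc \<beta>"
  by (simp add: bilin_def)

lemma bilinD: "bilin sc \<beta> \<Longrightarrow> linear_form (\<beta> u)" "bilin sc \<beta> \<Longrightarrow> linear_form (\<lambda>u. \<beta> u v)"
  by (auto simp: bilin_def)

lemma trilinI:
  "(\<And>x y. linear_form (\<tau> x y)) \<Longrightarrow> (\<And>x z. linear_form (\<lambda>y. \<tau> x y z)) \<Longrightarrow>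
   (\<And>y z. linear_form (\<lambda>x. \<tau> x y z)) \<Longrightarrow> trilin sc \<tau>"
  by (simp add: trilin_def)

lemma coproduct_add: "bilin sc \<beta> \<Longrightarrow> sw Delta (a + b) \<beta> = sw Delta a \<beta> + sw Delta b \<beta>"
  using coproduct_linear[of \<beta> 1 a 1 b] by simp

lemma coproduct_scale: "bilin sc \<beta> \<Longrightarrow> sw Delta (sc c a) \<beta> = c * sw Delta a \<beta>"
  using coproduct_linear[of \<beta> c a 0 a] by simp

lemma linear_form_sw: "linear_form \<phi> \<Longrightarrow> \<phi> (sw D a f) = sw D a (\<lambda>x y. \<phi> (f x y))"
  by (rule sw_comp_morphism) (auto simp: linear_form_add linear_form_zero)

lemma linear_form_comp: "linear_form \<phi> \<Longrightarrow> linear_op L \<Longrightarrow> linear_form (\<lambda>x. \<phi> (L x))"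
  by (rule linear_formI) (auto simp: linear_form_add linear_form_scale linear_op_add linear_op_scale)

lemma linear_form_bilin_left: "bilin sc \<gamma> \<Longrightarrow> linear_op L \<Longrightarrow> linear_form (\<lambda>x. \<gamma> (L x) c)"
  and linear_form_bilin_right: "bilin sc \<gamma> \<Longrightarrow> linear_op L \<Longrightarrow> linear_form (\<lambda>x. \<gamma> c (L x))"
  using linear_form_comp bilinD by blast+

lemma linear_form_sw_coproduct:
  assumes "linear_op L" and "\<And>u. linear_form (\<beta> u)" and "\<And>v. linear_form (\<lambda>u. \<beta> u v)"
  shows "linear_form (\<lambda>x. sw Delta (L x) \<beta>)"
  using assms bilinI[of \<beta>]
  by (intro linear_formI) (auto simp: linear_op_add linear_op_scale coproduct_add coproduct_scale)

lemma linear_form_sw_fun: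
  assumes "\<And>u v. linear_form (\<lambda>x. F x u v)"
  shows "linear_form (\<lambda>x. sw Delta a (F x))"
proof (rule linear_formI)
  fix x y
  have "F (x + y) = (\<lambda>u v. F x u v + F y u v)"
    using linear_form_add[OF assms] by (intro ext) auto
  then show "sw Delta a (F (x + y)) = sw Delta a (F x) + sw Delta a (F y)"
    by (simp add: sw_add)
next
  fix c x
  have "F (sc c x) = (\<lambda>u v. c * F x u v)"
    using linear_form_scale[OF assms] by (intro ext) auto
  then show "sw Delta a (F (sc c x)) = c * sw Delta a (F x)"
    by (simp add: sw_const_mult)
qed

lemma linear_op_ident: "linear_op (\<lambda>x. x)"
  by (rule linear_opI) auto

lemma linear_op_mult_left: "linear_op L \<Longrightarrow> linear_op (\<lambda>x. c * L x)"
  by (rule linear_opI) (auto simp: linear_op_add linear_op_scale distrib_left scale_mult_right)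

lemma linear_op_mult_right: "linear_op L \<Longrightarrow> linear_op (\<lambda>x. L x * c)"
  by (rule linear_opI) (auto simp: linear_op_add linear_op_scale distrib_right scale_mult_left)

lemma linear_op_antipode_comp: "linear_op L \<Longrightarrow> linear_op (\<lambda>x. S (L x))"
  by (rule linear_opI) (auto simp: linear_op_add linear_op_scale antipode_linear)

lemmas linear_intros = linear_form_sw_coproduct linear_form_sw_fun
  linear_op_ident linear_op_mult_left linear_op_mult_right linear_op_antipode_comp

lemma linear_forms_separate:
  assumes "\<And>\<phi>. linear_form \<phi> \<Longrightarrow> \<phi> x = \<phi> y"
  shows "x = y"
proof (rule ccontr)
  assume "x \<noteq> y"
  interpret vp: vector_space_pair sc "(*)"
    using vector_space vector_space_field_mult by (simp add: vector_space_pair_def)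
  have indep: "vs.independent {x - y}"
    using \<open>x \<noteq> y\<close> by (simp add: vs.independent_insert vs.span_empty)
  define \<phi> where "\<phi> = vp.construct {x - y} (\<lambda>_. 1)"
  have lin: "linear_form \<phi>"
    unfolding \<phi>_def by (rule vp.linear_construct[OF indep])
  have "\<phi> (x - y) = 1"
    unfolding \<phi>_def by (rule vp.construct_basis[OF indep]) simp
  moreover have "\<phi> x = \<phi> (x - y) + \<phi> y"
    using linear_form_add[OF lin, of "x - y" y] by simp
  ultimately show False
    using assms[OF lin] by simp
qed

lemma sw_counit_left: "linear_form \<phi> \<Longrightarrow> sw Delta h (\<lambda>x y. eps x * \<phi> y) = \<phi> h"
  using linear_form_sw[of \<phi> Delta h "\<lambda>x y. sc (eps x) y"] by (simp add: counit_left linear_form_scale)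

lemma sw_counit_right: "linear_form \<phi> \<Longrightarrow> sw Delta h (\<lambda>x y. \<phi> x * eps y) = \<phi> h"
  using linear_form_sw[of \<phi> Delta h "\<lambda>x y. sc (eps y) x"]
  by (simp add: counit_right linear_form_scale mult.commute)

lemma counit_antipode: "eps (S h) = eps h"
proof -
  have "eps (S h) = sw Delta h (\<lambda>x y. eps (S x) * eps y)"
    by (rule sw_counit_right[symmetric]) (rule linear_form_comp[OF counit_linear antipode_linear])
  also have "\<dots> = eps (sw Delta h (\<lambda>x y. S x * y))"
    by (simp add: linear_form_sw[OF counit_linear] counit_mult)
  finally show ?thesis
    by (simp add: antipode_left linear_form_scale[OF counit_linear] counit_one)
qed

lemma sw_coproduct_middle_swap:
  assumes "\<And>q u v. linear_form (\<lambda>p. F p q u v)" and "\<And>p u v. linear_form (\<lambda>q. F p q u v)"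
    and "\<And>p q v. linear_form (\<lambda>u. F p q u v)" and "\<And>p q u. linear_form (\<lambda>v. F p q u v)"
  shows "sw Delta a (\<lambda>x y. sw Delta x (\<lambda>p q. sw Delta y (\<lambda>u v. F p q u v)))
       = sw Delta a (\<lambda>x y. sw Delta x (\<lambda>p q. sw Delta y (\<lambda>u v. F p u q v)))"
proof -
  have swap_inner: "sw Delta y (\<lambda>q w. sw Delta w (\<lambda>u v. F x q u v))
      = sw Delta y (\<lambda>q w. sw Delta w (\<lambda>u v. F x u q v))" for x y
  proof -
    have "sw Delta y (\<lambda>q w. sw Delta w (\<lambda>u v. F x q u v))
        = sw Delta y (\<lambda>w v. sw Delta w (\<lambda>q u. F x q u v))"
      by (rule coassoc[symmetric], rule trilinI) (intro linear_intros assms)+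
    also have "\<dots> = sw Delta y (\<lambda>w v. sw Delta w (\<lambda>q u. F x u q v))"
      by (subst cocomm) (auto intro!: bilinI assms)
    also have "\<dots> = sw Delta y (\<lambda>q w. sw Delta w (\<lambda>u v. F x u q v))"
      by (rule coassoc, rule trilinI) (intro linear_intros assms)+
    finally show ?thesis .
  qed
  have "sw Delta a (\<lambda>x y. sw Delta x (\<lambda>p q. sw Delta y (\<lambda>u v. F p q u v)))
      = sw Delta a (\<lambda>x y. sw Delta y (\<lambda>q w. sw Delta w (\<lambda>u v. F x q u v)))"
    by (rule coassoc, rule trilinI) (intro linear_intros assms)+
  also have "\<dots> = sw Delta a (\<lambda>x y. sw Delta y (\<lambda>q w. sw Delta w (\<lambda>u v. F x u q v)))"
    by (simp only: swap_inner)
  also have "\<dots> = sw Delta a (\<lambda>x y. sw Delta x (\<lambda>p q. sw Delta y (\<lambda>u v. F p u q v)))"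
    by (rule coassoc[symmetric], rule trilinI) (intro linear_intros assms)+
  finally show ?thesis .
qed

lemma coproduct_antipode_mult:
  assumes "bilin sc \<theta>"
  shows "sw Delta x (\<lambda>u v. sw Delta (S u * v) \<theta>) = eps x * \<theta> 1 1"
proof -
  have "sw Delta x (\<lambda>u v. sw Delta (S u * v) \<theta>) = sw Delta (sw Delta x (\<lambda>u v. S u * v)) \<theta>"
    by (rule linear_form_sw[symmetric]) (intro linear_intros bilinD[OF assms])
  then show ?thesis
    by (simp add: antipode_left coproduct_scale[OF assms] coproduct_one[OF assms])
qed

lemma sw_mult_antipode_interleaved:
  assumes "bilin sc \<delta>"
  shows "sw Delta y (\<lambda>p q. sw Delta p (\<lambda>p1 p2. sw Delta q (\<lambda>q1 q2. \<delta> (p1 * S q1) (p2 * S q2))))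
       = eps y * \<delta> 1 1"
proof -
  note linear = linear_form_bilin_left[OF assms] linear_form_bilin_right[OF assms]
  have antipode_pair: "sw Delta p (\<lambda>p1 p2. sw Delta q (\<lambda>q1 q2. \<delta> (p1 * S p2) (q1 * S q2)))
      = eps p * eps q * \<delta> 1 1" for p q
  proof -
    have "sw Delta p (\<lambda>p1 p2. sw Delta q (\<lambda>q1 q2. \<delta> (p1 * S p2) (q1 * S q2)))
        = sw Delta p (\<lambda>p1 p2. \<delta> (p1 * S p2) (sw Delta q (\<lambda>q1 q2. q1 * S q2)))"
      by (subst linear_form_sw[OF bilinD(1)[OF assms]]) (rule refl)
    also have "\<dots> = \<delta> (sw Delta p (\<lambda>p1 p2. p1 * S p2)) (sw Delta q (\<lambda>q1 q2. q1 * S q2))"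
      by (subst linear_form_sw[OF bilinD(2)[OF assms]]) (rule refl)
    finally show ?thesis
      by (simp add: antipode_right linear_form_scale[OF bilinD(1)[OF assms]]
          linear_form_scale[OF bilinD(2)[OF assms]])
  qed
  have "sw Delta y (\<lambda>p q. sw Delta p (\<lambda>p1 p2. sw Delta q (\<lambda>q1 q2. \<delta> (p1 * S q1) (p2 * S q2))))
      = sw Delta y (\<lambda>p q. sw Delta p (\<lambda>p1 p2. sw Delta q (\<lambda>q1 q2. \<delta> (p1 * S p2) (q1 * S q2))))"
    by (rule sw_coproduct_middle_swap) (intro linear_intros linear)+
  also have "\<dots> = sw Delta y (\<lambda>p q. eps p * eps q) * \<delta> 1 1"
    by (simp add: antipode_pair sw_mult_const)
  finally show ?thesis
    by (simp add: sw_counit_left[OF counit_linear])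
qed

text \<open>\<Phi> = \<Delta> \<circ> S is a left and \<Psi> = (S \<otimes> S) \<circ> \<Delta> a right convolution inverse of \<Delta>, the
latter by cocommutativity, so they agree; G pairs \<Phi> * \<Delta> * \<Psi>, bracketed either way.\<close>
lemma coproduct_antipode:
  assumes "bilin sc \<gamma>"
  shows "sw Delta (S h) \<gamma> = sw Delta h (\<lambda>u v. \<gamma> (S u) (S v))"
proof -
  note linear = linear_form_bilin_left[OF assms] linear_form_bilin_right[OF assms]
  define \<Phi> where "\<Phi> x = sw Delta (S x) \<gamma>" for x
  define \<Psi> where "\<Psi> x = sw Delta x (\<lambda>u v. \<gamma> (S u) (S v))" for x
  define G where "G x p q = sw Delta p (\<lambda>p1 p2. sw Delta q (\<lambda>q1 q2.
       sw Delta (S x) (\<lambda>m n. \<gamma> (m * (p1 * S q1)) (n * (p2 * S q2)))))" for x p q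
  have G_counit_right: "sw Delta y (\<lambda>p q. G x p q) = \<Phi> x * eps y" for x y
  proof -
    have "bilin sc (\<lambda>s t. sw Delta (S x) (\<lambda>m n. \<gamma> (m * s) (n * t)))"
      by (intro bilinI linear_intros linear)
    from sw_mult_antipode_interleaved[OF this, of y] show ?thesis
      by (simp add: G_def \<Phi>_def mult.commute)
  qed
  have G_counit_left: "sw Delta x (\<lambda>x' p. G x' p q) = eps x * \<Psi> q" for x q
  proof -
    have "sw Delta x (\<lambda>x' p. G x' p q) = sw Delta q (\<lambda>q1 q2. sw Delta x (\<lambda>x' p. sw Delta p (\<lambda>p1 p2.
        sw Delta (S x') (\<lambda>m n. \<gamma> (m * (p1 * S q1)) (n * (p2 * S q2))))))"
      unfolding G_def by (subst sw_swap) (rule sw_swap)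
    also have "\<dots> = sw Delta q (\<lambda>q1 q2. eps x * \<gamma> (S q1) (S q2))"
    proof -
      have "sw Delta x (\<lambda>x' p. sw Delta p (\<lambda>p1 p2.
          sw Delta (S x') (\<lambda>m n. \<gamma> (m * (p1 * S q1)) (n * (p2 * S q2)))))
          = eps x * \<gamma> (S q1) (S q2)" for q1 q2
      proof -
        define \<theta> where "\<theta> s t = \<gamma> (s * S q1) (t * S q2)" for s t
        have "bilin sc \<theta>"
          unfolding \<theta>_def by (intro bilinI linear_intros linear)
        have "sw Delta x (\<lambda>x' p. sw Delta p (\<lambda>p1 p2.
            sw Delta (S x') (\<lambda>m n. \<gamma> (m * (p1 * S q1)) (n * (p2 * S q2)))))
            = sw Delta x (\<lambda>x' p. sw Delta (S x') (\<lambda>m n. sw Delta p (\<lambda>p1 p2. \<theta> (m * p1) (n * p2))))"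
          unfolding \<theta>_def by (subst sw_swap) (simp add: mult.assoc)
        also have "\<dots> = sw Delta x (\<lambda>x' p. sw Delta (S x' * p) \<theta>)"
          by (simp add: coproduct_mult[OF \<open>bilin sc \<theta>\<close>])
        finally show ?thesis
          by (simp add: coproduct_antipode_mult[OF \<open>bilin sc \<theta>\<close>] \<theta>_def)
      qed
      then show ?thesis by simp
    qed
    finally show ?thesis
      by (simp add: \<Psi>_def sw_const_mult)
  qed
  have "trilin sc G"
    unfolding G_def by (intro trilinI linear_intros linear)
  have "\<Phi> h = sw Delta h (\<lambda>x y. \<Phi> x * eps y)"
    by (rule sw_counit_right[symmetric]) (simp add: \<Phi>_def linear_intros linear)
  also have "\<dots> = sw Delta h (\<lambda>x y. sw Delta y (\<lambda>p q. G x p q))"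
    by (simp add: G_counit_right)
  also have "\<dots> = sw Delta h (\<lambda>x y. sw Delta x (\<lambda>x' p. G x' p y))"
    by (rule coassoc[OF \<open>trilin sc G\<close>, symmetric])
  also have "\<dots> = \<Psi> h"
    by (simp add: G_counit_left sw_counit_left \<Psi>_def linear_intros linear)
  finally show ?thesis
    by (simp add: \<Phi>_def \<Psi>_def)
qed

end

locale rota_baxter_hopf_system = cocomm_hopf_algebra sc Delta eps S
  for sc :: "'f::field \<Rightarrow> 'h::ring_1 \<Rightarrow> 'h" and Delta eps S +
  fixes B1 B2 :: "'h \<Rightarrow> 'h"
  assumes rota_baxter_system: "rota_baxter_system sc Delta eps S B1 B2"
begin

lemma B1_linear: "linear_op B1"
  and coproduct_B1: "bilin sc \<beta> \<Longrightarrow> sw Delta (B1 a) \<beta> = sw Delta a (\<lambda>x y. \<beta> (B1 x) (B1 y))"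
  and counit_B1: "eps (B1 a) = eps a"
  and B2_linear: "linear_op B2"
  and coproduct_B2: "bilin sc \<beta> \<Longrightarrow> sw Delta (B2 a) \<beta> = sw Delta a (\<lambda>x y. \<beta> (B2 x) (B2 y))"
  and counit_B2: "eps (B2 a) = eps a"
  and B1_one: "B1 1 = 1"
  and B2_one: "B2 1 = 1"
  and B1_mult: "B1 a * B1 b = B1 (sw Delta a (\<lambda>x y. B1 x * b * S (B2 y)))"
  and B2_mult: "B2 a * B2 b = B2 (sw Delta a (\<lambda>x y. B1 x * b * S (B2 y)))"
  using rota_baxter_system unfolding rota_baxter_system_def coalg_hom_def by blast+

lemma linear_op_B1_comp: "linear_op L \<Longrightarrow> linear_op (\<lambda>x. B1 (L x))"
  and linear_op_B2_comp: "linear_op L \<Longrightarrow> linear_op (\<lambda>x. B2 (L x))"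
  by (auto intro!: linear_opI simp: linear_op_add linear_op_scale B1_linear B2_linear)

lemmas rbs_linear_intros = linear_intros linear_op_B1_comp linear_op_B2_comp

abbreviation \<sigma> :: "'h \<Rightarrow> 'h" where
  "\<sigma> \<equiv> rbs_cocycle Delta S B1 B2"

lemma B1_cocycle: "B1 (\<sigma> a) = B1 a"
  using B1_mult[of a 1] by (simp add: B1_one rbs_cocycle_def)

lemma B2_cocycle: "B2 (\<sigma> a) = B2 a"
  using B2_mult[of a 1] by (simp add: B2_one rbs_cocycle_def)

lemma linear_form_cocycle:
  "linear_form \<phi> \<Longrightarrow> \<phi> (\<sigma> a) = sw Delta a (\<lambda>x y. \<phi> (B1 x * S (B2 y)))"
  by (simp add: rbs_cocycle_def linear_form_sw)

lemma bilin_cocycle_summand: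
  assumes "linear_form \<phi>"
  shows "bilin sc (\<lambda>u v. \<phi> (B1 u * S (B2 v)))"
  by (intro bilinI linear_form_comp[OF assms] rbs_linear_intros)

lemma cocycle_linear: "linear_op \<sigma>"
proof (rule linear_opI)
  fix x y
  show "\<sigma> (x + y) = \<sigma> x + \<sigma> y"
  proof (rule linear_forms_separate)
    fix \<phi> assume "linear_form \<phi>"
    then show "\<phi> (\<sigma> (x + y)) = \<phi> (\<sigma> x + \<sigma> y)"
      by (simp add: linear_form_add linear_form_cocycle coproduct_add bilin_cocycle_summand)
  qed
next
  fix c x
  show "\<sigma> (sc c x) = sc c (\<sigma> x)"
  proof (rule linear_forms_separate)
    fix \<phi> assume "linear_form \<phi>"
    then show "\<phi> (\<sigma> (sc c x)) = \<phi> (sc c (\<sigma> x))"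
      by (simp add: linear_form_scale linear_form_cocycle coproduct_scale bilin_cocycle_summand)
  qed
qed

lemma counit_cocycle: "eps (\<sigma> a) = eps a"
  by (simp add: linear_form_cocycle[OF counit_linear] counit_mult counit_B1 counit_B2
      counit_antipode sw_counit_left[OF counit_linear])

lemma coproduct_cocycle:
  assumes "bilin sc \<beta>"
  shows "sw Delta (\<sigma> a) \<beta> = sw Delta a (\<lambda>x y. \<beta> (\<sigma> x) (\<sigma> y))"
proof -
  note linear = linear_form_bilin_left[OF assms] linear_form_bilin_right[OF assms]
  have coproduct_summand: "sw Delta (B1 x * S (B2 y)) \<beta>
      = sw Delta x (\<lambda>p q. sw Delta y (\<lambda>u v. \<beta> (B1 p * S (B2 u)) (B1 q * S (B2 v))))" for x y
  proof -
    have "sw Delta (B1 x * S (B2 y)) \<beta>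
        = sw Delta (B1 x) (\<lambda>p q. sw Delta (S (B2 y)) (\<lambda>u v. \<beta> (p * u) (q * v)))"
      by (rule coproduct_mult[OF assms])
    also have "\<dots> = sw Delta x (\<lambda>p q. sw Delta (S (B2 y)) (\<lambda>u v. \<beta> (B1 p * u) (B1 q * v)))"
      by (rule coproduct_B1) (intro bilinI rbs_linear_intros linear)
    also have "\<dots> = sw Delta x (\<lambda>p q. sw Delta (B2 y) (\<lambda>u v. \<beta> (B1 p * S u) (B1 q * S v)))"
      by (subst coproduct_antipode) (intro bilinI rbs_linear_intros linear, rule refl)
    also have "\<dots> = sw Delta x (\<lambda>p q. sw Delta y (\<lambda>u v. \<beta> (B1 p * S (B2 u)) (B1 q * S (B2 v))))"
      by (subst coproduct_B2) (intro bilinI rbs_linear_intros linear, rule refl)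
    finally show ?thesis .
  qed
  have "sw Delta (\<sigma> a) \<beta> = sw Delta a (\<lambda>x y. sw Delta (B1 x * S (B2 y)) \<beta>)"
    by (rule linear_form_cocycle) (intro linear_intros bilinD[OF assms])
  also have "\<dots> = sw Delta a (\<lambda>x y. sw Delta x (\<lambda>p q. sw Delta y (\<lambda>u v.
      \<beta> (B1 p * S (B2 u)) (B1 q * S (B2 v)))))"
    by (simp only: coproduct_summand)
  also have "\<dots> = sw Delta a (\<lambda>x y. sw Delta x (\<lambda>p q. sw Delta y (\<lambda>u v.
      \<beta> (B1 p * S (B2 q)) (B1 u * S (B2 v)))))"
    by (rule sw_coproduct_middle_swap) (intro rbs_linear_intros linear)+
  also have "\<dots> = sw Delta a (\<lambda>x y. \<beta> (\<sigma> x) (\<sigma> y))"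
    by (subst linear_form_cocycle[OF bilinD(2)[OF assms]])
      (simp add: linear_form_cocycle[OF bilinD(1)[OF assms]])
  finally show ?thesis .
qed

lemma cocycle_idem: "\<sigma> (\<sigma> a) = \<sigma> a"
proof (rule linear_forms_separate)
  fix \<phi> assume "linear_form \<phi>"
  then show "\<phi> (\<sigma> (\<sigma> a)) = \<phi> (\<sigma> a)"
    by (simp add: linear_form_cocycle coproduct_cocycle bilin_cocycle_summand B1_cocycle B2_cocycle)
qed

end

theorem mainTheorem4:
  fixes sc :: "'f::field_char_0 \<Rightarrow> 'h::ring_1 \<Rightarrow> 'h"
    and Delta :: "'h \<Rightarrow> ('h \<times> 'h) list" and eps :: "'h \<Rightarrow> 'f" and S B1 B2 :: "'h \<Rightarrow> 'h"
  assumes "rota_baxter_system sc Delta eps S B1 B2"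
  shows "B1 \<circ> rbs_cocycle Delta S B1 B2 = B1 \<and>
         B2 \<circ> rbs_cocycle Delta S B1 B2 = B2 \<and>
         rbs_cocycle Delta S B1 B2 \<circ> rbs_cocycle Delta S B1 B2 = rbs_cocycle Delta S B1 B2 \<and>
         coalg_hom sc Delta eps (rbs_cocycle Delta S B1 B2)"
proof -
  interpret rota_baxter_hopf_system sc Delta eps S B1 B2
    using assms by unfold_locales (auto simp: rota_baxter_system_def)
  have "coalg_hom sc Delta eps \<sigma>"
    unfolding coalg_hom_def using cocycle_linear coproduct_cocycle counit_cocycle by blast
  then show ?thesis
    by (simp add: fun_eq_iff B1_cocycle B2_cocycle cocycle_idem)
qed

end
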